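(* Let $M$ be a $3$-connected matroid and let $C^*$ be a $4$-element cocircuit of $M$. If there are distinct elements $c',c''\in C^*$ such that neither $c'$ nor $c''$ is in a triangle of $M$, then $M/c$ is $3$-connected for some $c\in C^*$. *)

theory Defs
  imports Main
begin

definition matroid :: "'a set \<Rightarrow> ('a set \<Rightarrow> bool) \<Rightarrow> bool" where
  "matroid E indep \<longleftrightarrow>
     finite E \<and> indep {} \<and>
     (\<forall>I. indep I \<longrightarrow> I \<subseteq> E) \<and>
     (\<forall>I J. indep J \<and> I \<subseteq> J \<longrightarrow> indep I) \<and>
     (\<forall>I J. indep I \<and> indep J \<and> card I < card J \<longrightarrow> (\<exists>x \<in> J - I. indep (insert x I)))"

definition rk :: "('a set \<Rightarrow> bool) \<Rightarrow> 'a set \<Rightarrow> nat" where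
  "rk indep X = Max {card I | I. I \<subseteq> X \<and> indep I}"

definition basis :: "'a set \<Rightarrow> ('a set \<Rightarrow> bool) \<Rightarrow> 'a set \<Rightarrow> bool" where
  "basis E indep B \<longleftrightarrow> indep B \<and> (\<forall>x \<in> E - B. \<not> indep (insert x B))"

definition circuit :: "'a set \<Rightarrow> ('a set \<Rightarrow> bool) \<Rightarrow> 'a set \<Rightarrow> bool" where
  "circuit E indep C \<longleftrightarrow> C \<subseteq> E \<and> \<not> indep C \<and> (\<forall>D. D \<subset> C \<longrightarrow> indep D)"

definition dual_indep :: "'a set \<Rightarrow> ('a set \<Rightarrow> bool) \<Rightarrow> 'a set \<Rightarrow> bool" where
  "dual_indep E indep I \<longleftrightarrow> I \<subseteq> E \<and> (\<exists>B. basis E indep B \<and> I \<inter> B = {})"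

definition cocircuit :: "'a set \<Rightarrow> ('a set \<Rightarrow> bool) \<Rightarrow> 'a set \<Rightarrow> bool" where
  "cocircuit E indep C \<longleftrightarrow> circuit E (dual_indep E indep) C"

definition triangle :: "'a set \<Rightarrow> ('a set \<Rightarrow> bool) \<Rightarrow> 'a set \<Rightarrow> bool" where
  "triangle E indep T \<longleftrightarrow> circuit E indep T \<and> card T = 3"

definition in_triangle :: "'a set \<Rightarrow> ('a set \<Rightarrow> bool) \<Rightarrow> 'a \<Rightarrow> bool" where
  "in_triangle E indep e \<longleftrightarrow> (\<exists>T. triangle E indep T \<and> e \<in> T)"

text \<open>Contraction M/c (ground set E - {c}); if c is a loop, M/c = M\c.\<close>
definition contract_indep :: "('a set \<Rightarrow> bool) \<Rightarrow> 'a \<Rightarrow> 'a set \<Rightarrow> bool" where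
  "contract_indep indep c I \<longleftrightarrow> c \<notin> I \<and>
     (if indep {c} then indep (insert c I) else indep I)"

definition separation :: "nat \<Rightarrow> 'a set \<Rightarrow> ('a set \<Rightarrow> bool) \<Rightarrow> 'a set \<Rightarrow> bool" where
  "separation k E indep X \<longleftrightarrow> X \<subseteq> E \<and> card X \<ge> k \<and> card (E - X) \<ge> k \<and>
     int (rk indep X) + int (rk indep (E - X)) - int (rk indep E) < int k"

definition n_connected :: "nat \<Rightarrow> 'a set \<Rightarrow> ('a set \<Rightarrow> bool) \<Rightarrow> bool" where
  "n_connected n E indep \<longleftrightarrow> (\<forall>k X. 1 \<le> k \<and> k < n \<longrightarrow> \<not> separation k E indep X)"

end

theory Submission imports Defs begin

text \<open>Suppose \<open>M/c1\<close> is not 3-connected. A 2-separation of \<open>M/c1\<close> is a vertical 3-separation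
  \<open>(X, {c1}, Y)\<close> of \<open>M\<close> with \<open>c1\<close> spanned by both sides. No set avoiding \<open>C*\<close> spans \<open>c1\<close>, so
  both sides meet the three elements of \<open>C* - {c1}\<close>, and one side, say \<open>X\<close>, meets \<open>C*\<close> in a
  single element \<open>x\<close>, which is then not spanned by \<open>Y\<close>.

  If \<open>x\<close> is in no triangle, \<open>M/x\<close> is 3-connected: a vertical separation \<open>(P, {x}, Q)\<close> would
  cross \<open>(X, {c1}, Y)\<close>, and in every distribution of \<open>X - {x}\<close> and \<open>Y\<close> over \<open>P\<close> and \<open>Q\<close>
  either submodular uncrossing produces a 2-separation of \<open>M\<close>, or the absence of triangles
  through \<open>c1\<close> and \<open>x\<close> forces \<open>x\<close> into the closure of \<open>Y\<close> or \<open>r P\<close> to be too large.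

  If \<open>x\<close> is in a triangle, the triangle meets \<open>C*\<close> in a second element \<open>w \<in> Y\<close>, and moving \<open>w\<close>
  into \<open>X\<close> gives a vertical separation at \<open>c1\<close> whose other side meets \<open>C*\<close> only in \<open>c2\<close>;
  the first case then applies to \<open>c2\<close>.\<close>

lemma rk_eqI:
  assumes "\<exists>I. I \<subseteq> X \<and> P I \<and> card I = n"
    and "\<And>I. I \<subseteq> X \<Longrightarrow> P I \<Longrightarrow> card I \<le> n"
  shows "rk P X = n"
proof -
  let ?S = "{card I | I. I \<subseteq> X \<and> P I}"
  have "finite ?S" by (rule finite_subset[of _ "{..n}"]) (auto intro: assms(2))
  moreover have "n \<in> ?S" using assms(1) by auto
  ultimately show ?thesis unfolding rk_def using assms(2) by (intro Max_eqI) auto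
qed

lemma card_Int_split:
  assumes "finite S" "S \<subseteq> U \<union> V" "U \<inter> V = {}"
  shows "card S = card (S \<inter> U) + card (S \<inter> V)"
proof -
  have "card ((S \<inter> U) \<union> (S \<inter> V)) = card (S \<inter> U) + card (S \<inter> V)"
    using assms(1,3) by (intro card_Un_disjoint) auto
  moreover have "(S \<inter> U) \<union> (S \<inter> V) = S" using assms(2) by blast
  ultimately show ?thesis by simp
qed

locale finite_matroid =
  fixes E :: "'a set" and indep :: "'a set \<Rightarrow> bool"
  assumes matroid: "matroid E indep"
begin

abbreviation r where "r \<equiv> rk indep"

lemma finite_E: "finite E" using matroid unfolding matroid_def by auto
lemma indep_empty: "indep {}" using matroid unfolding matroid_def by auto
lemma indep_subset_E: "indep I \<Longrightarrow> I \<subseteq> E" using matroid unfolding matroid_def by auto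
lemma indep_subset: "indep J \<Longrightarrow> I \<subseteq> J \<Longrightarrow> indep I" using matroid unfolding matroid_def by blast
lemma indep_augment: "indep I \<Longrightarrow> indep J \<Longrightarrow> card I < card J \<Longrightarrow> \<exists>x\<in>J - I. indep (insert x I)"
  using matroid unfolding matroid_def by auto
lemma indep_finite: "indep I \<Longrightarrow> finite I" using indep_subset_E finite_E finite_subset by blast

lemma indep_card_le: "indep I \<Longrightarrow> card I \<le> card E"
  using indep_subset_E finite_E card_mono by blast

lemma finite_indep_cards: "finite {card I | I. I \<subseteq> X \<and> indep I}"
  by (rule finite_subset[of _ "{..card E}"]) (auto intro: indep_card_le)

lemma card_le_rk: "indep I \<Longrightarrow> I \<subseteq> X \<Longrightarrow> card I \<le> r X"
  unfolding rk_def using finite_indep_cards by (intro Max_ge) auto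

lemma obtain_rk_indep:
  obtains I where "I \<subseteq> X" "indep I" "card I = r X"
proof -
  have "r X \<in> {card I | I. I \<subseteq> X \<and> indep I}"
    unfolding rk_def using finite_indep_cards indep_empty by (intro Max_in) auto
  then show ?thesis using that by auto
qed

lemma indep_extend_rk:
  "indep I \<Longrightarrow> I \<subseteq> X \<Longrightarrow> \<exists>J. I \<subseteq> J \<and> J \<subseteq> X \<and> indep J \<and> card J = r X"
proof (induction "r X - card I" arbitrary: I rule: less_induct)
  case less
  have le: "card I \<le> r X" using card_le_rk less.prems by auto
  show ?case
  proof (cases "card I = r X")
    case True
    then show ?thesis using less.prems by blast
  next
    case False
    obtain K where K: "K \<subseteq> X" "indep K" "card K = r X" by (rule obtain_rk_indep)
    with False le obtain z where z: "z \<in> K - I" "indep (insert z I)"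
      using indep_augment[OF less.prems(1) K(2)] by force
    then have "card (insert z I) = card I + 1" using indep_finite[OF less.prems(1)] by auto
    then have "r X - card (insert z I) < r X - card I" using False le by auto
    moreover have "insert z I \<subseteq> X" using z(1) K(1) less.prems(2) by blast
    ultimately obtain J where "insert z I \<subseteq> J" "J \<subseteq> X" "indep J" "card J = r X"
      using less.hyps[OF _ z(2)] by blast
    then show ?thesis by blast
  qed
qed

lemma rk_mono: "X \<subseteq> Y \<Longrightarrow> r X \<le> r Y"
proof -
  assume XY: "X \<subseteq> Y"
  obtain I where I: "I \<subseteq> X" "indep I" "card I = r X" by (rule obtain_rk_indep)
  have "I \<subseteq> Y" using I(1) XY by blast
  with I show ?thesis using card_le_rk by fastforce
qed

lemma rk_le_card: "finite X \<Longrightarrow> r X \<le> card X"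
proof -
  assume f: "finite X"
  obtain I where I: "I \<subseteq> X" "indep I" "card I = r X" by (rule obtain_rk_indep)
  then show ?thesis using card_mono[OF f I(1)] by simp
qed

lemma rk_le_rk_E: "r X \<le> r E"
proof -
  obtain I where I: "I \<subseteq> X" "indep I" "card I = r X" by (rule obtain_rk_indep)
  have "card I \<le> r E" using card_le_rk[OF I(2) indep_subset_E[OF I(2)]] .
  then show ?thesis using I(3) by simp
qed

lemma rk_insert_le: "r (insert x X) \<le> r X + 1"
proof -
  obtain J where J: "J \<subseteq> insert x X" "indep J" "card J = r (insert x X)" by (rule obtain_rk_indep)
  have "J - {x} \<subseteq> X" using J by auto
  moreover have "indep (J - {x})" using J indep_subset by blast
  ultimately have "card (J - {x}) \<le> r X" using card_le_rk by blast
  moreover have "card J \<le> card (J - {x}) + 1"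
    by (cases "card J") (simp_all add: card_Diff_singleton_if)
  ultimately show ?thesis using J by auto
qed

lemma rk_submod: "r (X \<union> Y) + r (X \<inter> Y) \<le> r X + r Y"
proof -
  obtain I where I: "I \<subseteq> X \<inter> Y" "indep I" "card I = r (X \<inter> Y)" by (rule obtain_rk_indep)
  have IXY: "I \<subseteq> X \<union> Y" using I(1) by blast
  obtain J where J: "I \<subseteq> J" "J \<subseteq> X \<union> Y" "indep J" "card J = r (X \<union> Y)"
    using indep_extend_rk[OF I(2) IXY] by blast
  have fJ: "finite J" using indep_finite[OF J(3)] .
  have "card (J \<inter> X) \<le> r X" by (rule card_le_rk[OF indep_subset[OF J(3)]]) simp_all
  moreover have "card (J \<inter> Y) \<le> r Y" by (rule card_le_rk[OF indep_subset[OF J(3)]]) simp_all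
  moreover have "card (J \<inter> X \<inter> Y) \<le> r (X \<inter> Y)" by (rule card_le_rk[OF indep_subset[OF J(3)]]) blast+
  moreover have "card (J \<inter> X) + card (J \<inter> Y) = card J + card (J \<inter> X \<inter> Y)"
  proof -
    have "J \<inter> X \<union> J \<inter> Y = J" "J \<inter> X \<inter> (J \<inter> Y) = J \<inter> X \<inter> Y" using J(2) by blast+
    then show ?thesis using card_Un_Int[of "J \<inter> X" "J \<inter> Y"] fJ by simp
  qed
  moreover have "card I \<le> card (J \<inter> X \<inter> Y)" using I(1) J(1) fJ by (intro card_mono) auto
  ultimately show ?thesis using I(3) J(4) by linarith
qed

lemma indep_iff_rk: "finite X \<Longrightarrow> indep X \<longleftrightarrow> r X = card X"
proof
  assume "finite X" "indep X"
  then show "r X = card X" using card_le_rk[of X X] rk_le_card[of X] by simp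
next
  assume f: "finite X" and e: "r X = card X"
  obtain I where I: "I \<subseteq> X" "indep I" "card I = r X" by (rule obtain_rk_indep)
  then have "I = X" using card_subset_eq[OF f I(1)] e by simp
  then show "indep X" using I by simp
qed

text \<open>Closure is expressed by rank equations: \<open>r (insert e S) = r S\<close> says that \<open>e\<close> lies in the
  closure of \<open>S\<close>.\<close>
lemma rk_insert_eq_mono:
  assumes "r (insert e S) = r S" and "S \<subseteq> T"
  shows "r (insert e T) = r T"
proof -
  have "insert e S \<union> T = insert e T" using assms(2) by auto
  then have "r (insert e T) + r (insert e S \<inter> T) \<le> r (insert e S) + r T"
    using rk_submod[of "insert e S" T] by simp
  moreover have "r S \<le> r (insert e S \<inter> T)" using assms(2) by (intro rk_mono) auto
  moreover have "r T \<le> r (insert e T)" by (rule rk_mono) auto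
  ultimately show ?thesis using assms(1) by linarith
qed

lemma basis_card_eq_rk: "basis E indep B \<Longrightarrow> card B = r E"
proof (rule ccontr)
  assume b: "basis E indep B" and ne: "card B \<noteq> r E"
  then have iB: "indep B" unfolding basis_def by auto
  obtain K where K: "K \<subseteq> E" "indep K" "card K = r E" by (rule obtain_rk_indep)
  have "card B \<le> r E" using card_le_rk[OF iB indep_subset_E[OF iB]] .
  then have "card B < card K" using ne K(3) by linarith
  then obtain z where "z \<in> K - B" "indep (insert z B)" using indep_augment[OF iB K(2)] by blast
  then show False using b K(1) unfolding basis_def by blast
qed

lemma basis_if_card_eq_rk:
  assumes J: "indep J" "card J = r E"
  shows "basis E indep J"
  unfolding basis_def
proof (intro conjI ballI notI)
  fix z assume z: "z \<in> E - J" "indep (insert z J)"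
  then have "card (insert z J) \<le> r E" using card_le_rk[OF z(2) indep_subset_E[OF z(2)]] by blast
  moreover have "card (insert z J) = card J + 1" using z(1) indep_finite[OF J(1)] by simp
  ultimately show False using J(2) by simp
qed (rule J(1))

lemma cocircuit_rk_insert:
  assumes cc: "cocircuit E indep C" and e: "e \<in> C" and S: "S \<subseteq> E - C"
  shows "r (insert e S) = r S + 1"
proof (rule ccontr)
  assume "r (insert e S) \<noteq> r S + 1"
  moreover have "r S \<le> r (insert e S)" by (rule rk_mono) auto
  ultimately have eq: "r (insert e S) = r S" using rk_insert_le[of e S] by linarith
  have C: "C \<subseteq> E" "\<not> dual_indep E indep C" "\<forall>D. D \<subset> C \<longrightarrow> dual_indep E indep D"
    using cc unfolding cocircuit_def circuit_def by auto
  have "C - {e} \<subset> C" using e by blast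
  then have "dual_indep E indep (C - {e})" using C(3) by blast
  then obtain B where B: "basis E indep B" "(C - {e}) \<inter> B = {}" unfolding dual_indep_def by blast
  have iB: "indep B" using B(1) unfolding basis_def by blast
  have "B \<subseteq> insert e (E - C)" using B(2) indep_subset_E[OF iB] by blast
  then have "card B \<le> r (insert e (E - C))" by (rule card_le_rk[OF iB])
  then have "r E \<le> r (insert e (E - C))" using basis_card_eq_rk[OF B(1)] by simp
  also have "\<dots> = r (E - C)" using rk_insert_eq_mono[OF eq S] .
  finally have rC: "r (E - C) = r E" using rk_le_rk_E[of "E - C"] by simp
  obtain J where J: "J \<subseteq> E - C" "indep J" "card J = r (E - C)" by (rule obtain_rk_indep)
  have "basis E indep J" using basis_if_card_eq_rk[OF J(2)] J(3) rC by simp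
  then have "dual_indep E indep C" unfolding dual_indep_def using C(1) J(1) by blast
  then show False using C(2) by blast
qed

lemma rk_contract:
  assumes c: "indep {c}" and Z: "c \<notin> Z"
  shows "rk (contract_indep indep c) Z = r (insert c Z) - 1"
proof (rule rk_eqI)
  obtain J where J: "{c} \<subseteq> J" "J \<subseteq> insert c Z" "indep J" "card J = r (insert c Z)"
    using indep_extend_rk[OF c, of "insert c Z"] by blast
  have "insert c (J - {c}) = J" using J(1) by blast
  then have "contract_indep indep c (J - {c})" unfolding contract_indep_def using c J(3) by simp
  moreover have "J - {c} \<subseteq> Z" using J(2) by blast
  moreover have "card (J - {c}) = r (insert c Z) - 1" using J(1,4) by (simp add: card_Diff_singleton)
  ultimately show "\<exists>I. I \<subseteq> Z \<and> contract_indep indep c I \<and> card I = r (insert c Z) - 1" by blast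
next
  fix I assume I: "I \<subseteq> Z" "contract_indep indep c I"
  then have ci: "c \<notin> I" "indep (insert c I)" unfolding contract_indep_def using c by auto
  have "insert c I \<subseteq> insert c Z" using I(1) by blast
  then have "card (insert c I) \<le> r (insert c Z)" by (rule card_le_rk[OF ci(2)])
  moreover have "card (insert c I) = card I + 1" using ci indep_finite[OF ci(2)] by simp
  ultimately show "card I \<le> r (insert c Z) - 1" by simp
qed

end

locale three_connected = finite_matroid +
  assumes three_connected: "n_connected 3 E indep"
    and card_E: "4 \<le> card E"
begin

lemma rk_add_rk_compl_ge:
  assumes "X \<subseteq> E" "2 \<le> card X" "2 \<le> card (E - X)"
  shows "r E + 2 \<le> r X + r (E - X)"
proof -
  have "\<not> separation 2 E indep X" using three_connected unfolding n_connected_def by simp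
  then show ?thesis using assms unfolding separation_def by linarith
qed

lemma card_le_card_compl: "W \<subseteq> E - Z \<Longrightarrow> card W \<le> card (E - Z)"
  using finite_E by (intro card_mono) auto

lemma rk_pair:
  assumes "u \<in> E" "v \<in> E" "u \<noteq> v"
  shows "r {u, v} = 2" and "r (E - {u, v}) = r E"
proof -
  have "card (E - {u, v}) = card E - 2" using assms finite_E by (simp add: card_Diff_subset)
  then have "r E + 2 \<le> r {u, v} + r (E - {u, v})"
    using assms card_E by (intro rk_add_rk_compl_ge) auto
  moreover have "r {u, v} \<le> 2" using rk_le_card[of "{u, v}"] assms by auto
  moreover have "r (E - {u, v}) \<le> r E" by (rule rk_mono) auto
  ultimately show "r {u, v} = 2" "r (E - {u, v}) = r E" by auto
qed

lemma indep_pair: "u \<in> E \<Longrightarrow> v \<in> E \<Longrightarrow> u \<noteq> v \<Longrightarrow> indep {u, v}"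
  using rk_pair(1) indep_iff_rk by auto

lemma indep_singleton: "u \<in> E \<Longrightarrow> indep {u}"
proof -
  assume u: "u \<in> E"
  have "card (E - {u}) \<noteq> 0" using u card_E finite_E by (simp add: card_Diff_singleton)
  then have "E - {u} \<noteq> {}" by (metis card.empty)
  then obtain v where "v \<in> E" "v \<noteq> u" by blast
  then show ?thesis using indep_pair[of u v] u indep_subset by blast
qed

lemma rk_triple_if_not_in_triangle:
  assumes c: "c \<in> E" and nt: "\<not> in_triangle E indep c" and u: "u \<in> E" and v: "v \<in> E"
    and d: "c \<noteq> u" "c \<noteq> v" "u \<noteq> v"
  shows "r {c, u, v} = 3"
proof (rule ccontr)
  assume "r {c, u, v} \<noteq> 3"
  moreover have card3: "card {c, u, v} = 3" using d by auto
  ultimately have "\<not> indep {c, u, v}" using indep_iff_rk[of "{c, u, v}"] by auto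
  moreover have "indep D" if "D \<subset> {c, u, v}" for D
  proof -
    have "D \<subseteq> {c, u} \<or> D \<subseteq> {c, v} \<or> D \<subseteq> {u, v}" using that by blast
    then show ?thesis using indep_pair c u v d indep_subset by metis
  qed
  ultimately have "triangle E indep {c, u, v}"
    unfolding triangle_def circuit_def using c u v card3 by blast
  then show False using nt unfolding in_triangle_def by blast
qed

lemma triangle_rk_delete:
  assumes "triangle E indep T" "z \<in> T"
  shows "r (T - {z}) = r T"
proof -
  have T: "\<not> indep T" "indep (T - {z})" "card T = 3"
    using assms unfolding triangle_def circuit_def by auto
  have fT: "finite T" using T(3) card.infinite by fastforce
  have "r (T - {z}) = 2" using T(2,3) fT assms(2) indep_iff_rk[of "T - {z}"] by simp
  moreover have "r T \<noteq> 3" "r T \<le> 3" using T indep_iff_rk[OF fT] rk_le_card[OF fT] by auto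
  moreover have "r (T - {z}) \<le> r T" by (rule rk_mono) blast
  ultimately show ?thesis by linarith
qed

text \<open>A circuit and a cocircuit never meet in exactly one element.\<close>
lemma triangle_meets_cocircuit:
  assumes cc: "cocircuit E indep C" and T: "triangle E indep T" and x: "x \<in> T" "x \<in> C"
  obtains w where "w \<in> T" "w \<in> C" "w \<noteq> x"
proof (rule ccontr)
  assume "\<not> thesis"
  then have "T - {x} \<subseteq> E - C" using that T unfolding triangle_def circuit_def by blast
  then have "r (insert x (T - {x})) = r (T - {x}) + 1" using cocircuit_rk_insert[OF cc x(2)] by blast
  then show False using triangle_rk_delete[OF T x(1)] x(1) by (simp add: insert_absorb)
qed

text \<open>\<open>vert_sep c X\<close> says that \<open>(X, {c}, E - {c} - X)\<close> is a vertical 3-separation of \<open>M\<close>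
  with \<open>c\<close> spanned by both sides; equivalently, \<open>X\<close> is one side of a 2-separation of \<open>M/c\<close>.\<close>
definition vert_sep :: "'a \<Rightarrow> 'a set \<Rightarrow> bool" where
  "vert_sep c X \<longleftrightarrow> X \<subseteq> E - {c} \<and> 2 \<le> card X \<and> 2 \<le> card (E - {c} - X) \<and>
     r (insert c X) + r (E - X) \<le> r E + 2"

lemma vert_sep_compl:
  assumes c: "c \<in> E" and sep: "vert_sep c X"
  shows "vert_sep c (E - {c} - X)"
proof -
  have X: "X \<subseteq> E - {c}" using sep unfolding vert_sep_def by blast
  have "E - {c} - (E - {c} - X) = X" "insert c (E - {c} - X) = E - X" "E - (E - {c} - X) = insert c X"
    using X c by blast+
  then show ?thesis using sep unfolding vert_sep_def by auto
qed

lemma vert_sep_rk: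
  assumes c: "c \<in> E" and sep: "vert_sep c X"
  shows "r (insert c X) = r X" and "r (E - X) = r (E - {c} - X)"
    and "r X + r (E - {c} - X) = r E + 2"
proof -
  have X: "X \<subseteq> E - {c}" and cX: "2 \<le> card X" and cY: "2 \<le> card (E - {c} - X)"
    and le: "r (insert c X) + r (E - X) \<le> r E + 2" using sep unfolding vert_sep_def by auto
  have EY: "E - (E - {c} - X) = insert c X" using X c by blast
  have "card (E - {c} - X) \<le> card (E - X)" "card X \<le> card (E - (E - {c} - X))"
    using X by (auto intro: card_le_card_compl)
  then have "r E + 2 \<le> r X + r (E - X)" "r E + 2 \<le> r (E - {c} - X) + r (insert c X)"
    using X cX cY rk_add_rk_compl_ge[of X] rk_add_rk_compl_ge[of "E - {c} - X"] EY by auto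
  moreover have "r X \<le> r (insert c X)" "r (E - {c} - X) \<le> r (E - X)" by (auto intro: rk_mono)
  ultimately show "r (insert c X) = r X" "r (E - X) = r (E - {c} - X)"
    "r X + r (E - {c} - X) = r E + 2" using le by linarith+
qed

lemma vert_sep_card_ge_3:
  assumes c: "c \<in> E" and nt: "\<not> in_triangle E indep c" and sep: "vert_sep c X"
  shows "3 \<le> card X"
proof (rule ccontr)
  assume "\<not> 3 \<le> card X"
  then have "card X = 2" using sep unfolding vert_sep_def by linarith
  then obtain u w where uw: "X = {u, w}" "u \<noteq> w" by (meson card_2_iff)
  moreover have "X \<subseteq> E - {c}" using sep unfolding vert_sep_def by blast
  ultimately have "r (insert c X) = 3" using rk_triple_if_not_in_triangle[OF c nt] by blast
  moreover have "r X \<le> 2" using rk_le_card[of X] uw by simp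
  ultimately show False using vert_sep_rk(1)[OF c sep] by simp
qed

lemma vert_sep_insert:
  assumes c: "c \<in> E" and sep: "vert_sep c X" and w: "w \<in> E - {c} - X"
    and cl: "r (insert w (insert c X)) = r (insert c X)" and card: "3 \<le> card (E - {c} - X)"
  shows "vert_sep c (insert w X)"
  unfolding vert_sep_def
proof (intro conjI)
  show "insert w X \<subseteq> E - {c}" using sep w unfolding vert_sep_def by blast
  have "card X \<le> card (insert w X)" using finite_E sep unfolding vert_sep_def
    by (intro card_mono) (auto intro: finite_subset)
  then show "2 \<le> card (insert w X)" using sep unfolding vert_sep_def by linarith
  have "E - {c} - insert w X = (E - {c} - X) - {w}" by blast
  then show "2 \<le> card (E - {c} - insert w X)" using w card by (simp add: card_Diff_singleton)
  have "r (E - insert w X) \<le> r (E - X)" by (rule rk_mono) blast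
  then show "r (insert c (insert w X)) + r (E - insert w X) \<le> r E + 2"
    using cl sep unfolding vert_sep_def by (simp add: insert_commute)
qed

lemma vert_sep_meets_cocircuit:
  assumes cc: "cocircuit E indep C" and c: "c \<in> C" and sep: "vert_sep c X"
  shows "X \<inter> C \<noteq> {}"
proof
  assume "X \<inter> C = {}"
  then have "X \<subseteq> E - C" using sep unfolding vert_sep_def by blast
  then have "r (insert c X) = r X + 1" using cocircuit_rk_insert[OF cc c] by blast
  moreover have "c \<in> E" using cc c unfolding cocircuit_def circuit_def by blast
  ultimately show False using vert_sep_rk(1)[OF _ sep] by simp
qed

lemma vert_sep_if_not_three_connected_contract:
  assumes c: "c \<in> E" and nc: "\<not> n_connected 3 (E - {c}) (contract_indep indep c)"
  obtains X where "vert_sep c X"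
proof -
  obtain k X where k: "1 \<le> k" "k < 3" and sep: "separation k (E - {c}) (contract_indep indep c) X"
    using nc unfolding n_connected_def by blast
  have X: "X \<subseteq> E - {c}" and cX: "k \<le> card X" and cY: "k \<le> card (E - {c} - X)"
    and lt: "int (rk (contract_indep indep c) X) + int (rk (contract_indep indep c) (E - {c} - X))
        - int (rk (contract_indep indep c) (E - {c})) < int k"
    using sep unfolding separation_def by auto
  have ic: "indep {c}" using indep_singleton[OF c] .
  have rk_c: "int (rk (contract_indep indep c) Z) = int (r (insert c Z)) - 1" if "c \<notin> Z" for Z
  proof -
    have "r {c} \<le> r (insert c Z)" by (rule rk_mono) blast
    then have "1 \<le> r (insert c Z)" using indep_iff_rk[of "{c}"] ic by simp
    then show ?thesis using rk_contract[OF ic that] by simp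
  qed
  have "insert c (E - {c} - X) = E - X" "insert c (E - {c}) = E" "c \<notin> X" using X c by blast+
  then have "int (rk (contract_indep indep c) (E - {c} - X)) = int (r (E - X)) - 1"
    "int (rk (contract_indep indep c) (E - {c})) = int (r E) - 1"
    "int (rk (contract_indep indep c) X) = int (r (insert c X)) - 1"
    using rk_c[of "E - {c} - X"] rk_c[of "E - {c}"] rk_c[of X] by simp_all
  then have le: "r (insert c X) + r (E - X) \<le> r E + k" using lt by linarith
  have "r E + 2 \<le> r (insert c X) + r (E - X)"
  proof (cases "2 \<le> card X")
    case True
    have "card (insert c (E - {c} - X)) \<le> card (E - X)" using X c by (intro card_le_card_compl) blast
    then have "2 \<le> card (E - X)" using cY k(1) finite_E by simp
    then have "r E + 2 \<le> r X + r (E - X)" using X True by (intro rk_add_rk_compl_ge) auto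
    moreover have "r X \<le> r (insert c X)" by (rule rk_mono) blast
    ultimately show ?thesis by linarith
  next
    case False
    have fX: "finite X" using X finite_E finite_subset by blast
    have "card (E - {c} - X) = card (E - {c}) - card X" using X fX by (simp add: card_Diff_subset)
    moreover have "card X \<le> card (E - {c})" using X finite_E by (simp add: card_mono)
    moreover have "card (E - {c}) = card E - 1" using c by (simp add: card_Diff_singleton)
    ultimately have "card X + card (E - {c} - X) = card E - 1" by linarith
    then have "2 \<le> card (E - {c} - X)" using False card_E by linarith
    moreover have EY: "E - (E - {c} - X) = insert c X" using X c by blast
    moreover have "card (insert c X) = card X + 1" using X fX by (subst card_insert_disjoint) auto
    ultimately have "r E + 2 \<le> r (E - {c} - X) + r (E - (E - {c} - X))"
      using cX k(1) by (intro rk_add_rk_compl_ge) auto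
    then have "r E + 2 \<le> r (E - {c} - X) + r (insert c X)" unfolding EY .
    moreover have "r (E - {c} - X) \<le> r (E - X)" by (rule rk_mono) blast
    ultimately show ?thesis by linarith
  qed
  then have "k = 2" using le k by linarith
  then show ?thesis using that X cX cY le unfolding vert_sep_def by simp
qed

text \<open>Otherwise \<open>X - {x}\<close>, whose rank drops by one because it avoids \<open>C\<close>, would be one side
  of a 2-separation of \<open>M\<close>.\<close>
lemma vert_sep_cocircuit_rk_insert:
  assumes cc: "cocircuit E indep C" and e: "e \<in> C" and nt: "\<not> in_triangle E indep e"
    and sep: "vert_sep e X" and x: "X \<inter> C = {x}"
  shows "r (insert x (E - {e} - X)) = r (E - {e} - X) + 1"
proof (rule ccontr)
  let ?Y = "E - {e} - X" and ?A = "X - {x}"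
  assume ne: "r (insert x ?Y) \<noteq> r ?Y + 1"
  have eE: "e \<in> E" using e cc unfolding cocircuit_def circuit_def by blast
  have X: "X \<subseteq> E - {e}" using sep unfolding vert_sep_def by blast
  have xX: "x \<in> X" and xC: "x \<in> C" using x by blast+
  have "?A \<subseteq> E - C" using X x by blast
  then have rX: "r X = r ?A + 1"
    using cocircuit_rk_insert[OF cc xC, of ?A] by (simp add: insert_absorb[OF xX])
  have "r ?Y \<le> r (insert x ?Y)" by (rule rk_mono) blast
  then have "r (insert x ?Y) = r ?Y" using ne rk_insert_le[of x ?Y] by linarith
  then have "r (insert x (insert e ?Y)) = r (insert e ?Y)" by (rule rk_insert_eq_mono) blast
  moreover have "insert e ?Y = E - X" using X eE by blast
  moreover have "E - ?A = insert x (insert e ?Y)" using X xX eE by blast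
  ultimately have rEA: "r (E - ?A) = r ?Y" using vert_sep_rk(2)[OF eE sep] by simp
  have "3 \<le> card X" using vert_sep_card_ge_3[OF eE nt sep] .
  then have cA: "2 \<le> card ?A" using xX by (simp add: card_Diff_singleton)
  have "card {x, e} \<le> card (E - ?A)" using X xX eE by (intro card_le_card_compl) blast
  moreover have "x \<noteq> e" using X xX by blast
  ultimately have "2 \<le> card (E - ?A)" by simp
  then have "r E + 2 \<le> r ?A + r (E - ?A)" using rk_add_rk_compl_ge[of ?A] X cA by blast
  then show False using rX rEA vert_sep_rk(3)[OF eE sep] by simp
qed

lemma obtain_vert_sep_meeting_cocircuit_once:
  assumes cc: "cocircuit E indep C" and C4: "card C = 4" and c: "c \<in> C" and sep: "vert_sep c X"
  obtains X' x where "vert_sep c X'" "X' \<inter> C = {x}"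
proof -
  let ?Y = "E - {c} - X"
  have cE: "c \<in> E" and CE: "C \<subseteq> E" using c cc unfolding cocircuit_def circuit_def by blast+
  have sepY: "vert_sep c ?Y" using vert_sep_compl[OF cE sep] .
  have fC: "finite C" using C4 card.infinite by fastforce
  have "C - {c} = (X \<inter> C) \<union> (?Y \<inter> C)" "(X \<inter> C) \<inter> (?Y \<inter> C) = {}"
    using sep CE unfolding vert_sep_def by blast+
  moreover have "card (C - {c}) = 3" using C4 c by (simp add: card_Diff_singleton)
  ultimately have "card (X \<inter> C) + card (?Y \<inter> C) = 3"
    using card_Un_disjoint[of "X \<inter> C" "?Y \<inter> C"] fC by simp
  moreover have "card (X \<inter> C) \<noteq> 0" "card (?Y \<inter> C) \<noteq> 0"
    using vert_sep_meets_cocircuit[OF cc c] sep sepY fC by simp_all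
  ultimately have "card (X \<inter> C) = 1 \<or> card (?Y \<inter> C) = 1" by linarith
  then show ?thesis using that sep sepY by (metis card_1_singletonE)
qed

end

locale crossing_vert_seps = three_connected +
  fixes C :: "'a set" and e x :: 'a and X P :: "'a set"
  assumes cocircuit: "cocircuit E indep C"
    and e_in_C: "e \<in> C" and x_in_C: "x \<in> C"
    and e_not_in_triangle: "\<not> in_triangle E indep e"
    and x_not_in_triangle: "\<not> in_triangle E indep x"
    and vert_sep_e: "vert_sep e X" and X_Int_C: "X \<inter> C = {x}"
    and vert_sep_x: "vert_sep x P" and e_notin_P: "e \<notin> P"
begin

abbreviation Y where "Y \<equiv> E - {e} - X"
abbreviation Q where "Q \<equiv> E - {x} - P"
abbreviation A where "A \<equiv> X - {x}"

lemma e_in_E: "e \<in> E" and x_in_E: "x \<in> E"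
  using cocircuit e_in_C x_in_C unfolding cocircuit_def circuit_def by blast+

lemma X_subset: "X \<subseteq> E - {e}" and P_subset: "P \<subseteq> E - {x}"
  using vert_sep_e vert_sep_x unfolding vert_sep_def by blast+

lemma x_in_X: "x \<in> X"
  using X_Int_C by blast

lemmas set_facts = X_subset P_subset x_in_X e_notin_P e_in_E x_in_E

lemma rk_X: "r X = r A + 1"
proof -
  have "A \<subseteq> E - C" using X_subset X_Int_C by blast
  then show ?thesis using cocircuit_rk_insert[OF cocircuit x_in_C, of A] by (simp add: insert_absorb[OF x_in_X])
qed

lemma rk_insert_x_Y: "r (insert x Y) = r Y + 1"
  using vert_sep_cocircuit_rk_insert[OF cocircuit e_in_C e_not_in_triangle vert_sep_e X_Int_C] .

lemma card_ge_3: "3 \<le> card X" "3 \<le> card Y" "3 \<le> card P" "3 \<le> card Q"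
  using vert_sep_card_ge_3[OF e_in_E e_not_in_triangle vert_sep_e]
    vert_sep_card_ge_3[OF e_in_E e_not_in_triangle vert_sep_compl[OF e_in_E vert_sep_e]]
    vert_sep_card_ge_3[OF x_in_E x_not_in_triangle vert_sep_x]
    vert_sep_card_ge_3[OF x_in_E x_not_in_triangle vert_sep_compl[OF x_in_E vert_sep_x]]
  by simp_all

lemma card_A: "2 \<le> card A"
  using card_ge_3(1) x_in_X by (simp add: card_Diff_singleton)

lemma rk_e: "r (insert e X) = r X" "r (insert e Y) = r Y" "r X + r Y = r E + 2"
proof -
  have "insert e Y = E - X" using set_facts by blast
  then show "r (insert e X) = r X" "r (insert e Y) = r Y" "r X + r Y = r E + 2"
    using vert_sep_rk[OF e_in_E vert_sep_e] by simp_all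
qed

lemma rk_x: "r (insert x P) = r P" "r (insert x Q) = r Q" "r P + r Q = r E + 2"
proof -
  have "insert x Q = E - P" using set_facts by blast
  then show "r (insert x P) = r P" "r (insert x Q) = r Q" "r P + r Q = r E + 2"
    using vert_sep_rk[OF x_in_E vert_sep_x] by simp_all
qed

text \<open>The four quadrants of the two crossing separations are \<open>A \<inter> P\<close>, \<open>A \<inter> Q\<close>, \<open>Y \<inter> P\<close> and
  \<open>Y \<inter> Q\<close>; the next two lemmas uncross opposite quadrants by submodularity.\<close>
lemma uncross_A_Q_Y_P:
  assumes "2 \<le> card (A \<inter> Q)" "2 \<le> card (Y \<inter> P)"
  shows False
proof -
  have "A \<inter> (E - P) = A \<inter> Q" "A \<union> (E - P) = E - (Y \<inter> P)"
    "insert x P \<inter> (E - X) = Y \<inter> P" "insert x P \<union> (E - X) = E - (A \<inter> Q)"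
    using set_facts by blast+
  then have q1: "r (E - (Y \<inter> P)) + r (A \<inter> Q) \<le> r A + r (E - P)"
    and q2: "r (E - (A \<inter> Q)) + r (Y \<inter> P) \<le> r (insert x P) + r (E - X)"
    using rk_submod[of A "E - P"] rk_submod[of "insert x P" "E - X"] by simp_all
  have "card Y \<le> card (E - (A \<inter> Q))" "card A \<le> card (E - (Y \<inter> P))"
    using set_facts by (intro card_le_card_compl; blast)+
  then have "r E + 2 \<le> r (A \<inter> Q) + r (E - (A \<inter> Q))" "r E + 2 \<le> r (Y \<inter> P) + r (E - (Y \<inter> P))"
    using assms card_ge_3(2) card_A
    by (intro rk_add_rk_compl_ge; (use set_facts in blast)?; linarith)+
  moreover have "E - P = insert x Q" "E - X = insert e Y" using set_facts by blast+
  ultimately show False using q1 q2 rk_X rk_e rk_x by simp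
qed

lemma uncross_A_P_Y_Q:
  assumes "2 \<le> card (A \<inter> P)" "2 \<le> card (Y \<inter> Q)"
  shows False
proof -
  have "A \<inter> insert x P = A \<inter> P" "insert e (A \<union> insert x P) = E - (Y \<inter> Q)"
    "(E - P) \<inter> (E - X) = insert e (Y \<inter> Q)" "(E - P) \<union> (E - X) = E - (A \<inter> P)"
    using set_facts by blast+
  moreover have "r (insert e (A \<union> insert x P)) = r (A \<union> insert x P)"
    by (rule rk_insert_eq_mono[OF rk_e(1)]) blast
  ultimately have q1: "r (E - (Y \<inter> Q)) + r (A \<inter> P) \<le> r A + r (insert x P)"
    and q2: "r (E - (A \<inter> P)) + r (insert e (Y \<inter> Q)) \<le> r (E - P) + r (E - X)"
    using rk_submod[of A "insert x P"] rk_submod[of "E - P" "E - X"] by simp_all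
  have "r (Y \<inter> Q) \<le> r (insert e (Y \<inter> Q))" by (rule rk_mono) blast
  moreover have "card Y \<le> card (E - (A \<inter> P))" "card A \<le> card (E - (Y \<inter> Q))"
    using set_facts by (intro card_le_card_compl; blast)+
  then have "r E + 2 \<le> r (A \<inter> P) + r (E - (A \<inter> P))" "r E + 2 \<le> r (Y \<inter> Q) + r (E - (Y \<inter> Q))"
    using assms card_ge_3(2) card_A
    by (intro rk_add_rk_compl_ge; (use set_facts in blast)?; linarith)+
  moreover have "E - P = insert x Q" "E - X = insert e Y" using set_facts by blast+
  ultimately show False using q1 q2 rk_X rk_e rk_x by simp
qed

text \<open>If \<open>A\<close> meets both sides of \<open>P\<close> once, then \<open>X = {x, p, q}\<close> and \<open>p\<close> is spanned by
  \<open>{e, q, x} \<subseteq> Q \<union> {x}\<close>; moving \<open>p\<close> across shows that \<open>x\<close> is spanned by \<open>P - {p} \<subseteq> Y\<close>.\<close>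
lemma A_meets_P_and_Q_once:
  assumes "card (A \<inter> P) = 1" "card (A \<inter> Q) = 1"
  shows False
proof -
  obtain p where p: "A \<inter> P = {p}" using assms(1) by (rule card_1_singletonE)
  obtain q where q: "A \<inter> Q = {q}" using assms(2) by (rule card_1_singletonE)
  have X: "X = {x, p, q}" using p q set_facts by blast
  have d: "e \<noteq> q" "e \<noteq> x" "q \<noteq> x" "q \<in> E" using q set_facts by blast+
  have r3: "r {e, q, x} = 3"
    by (rule rk_triple_if_not_in_triangle[OF e_in_E e_not_in_triangle d(4) x_in_E d(1-3)])
  have "card X \<le> 3" unfolding X by (simp add: card_insert_if)
  then have "r (insert e X) \<le> 3" using rk_e(1) rk_le_card[of X] X by simp
  moreover have "insert e X = insert p {e, q, x}" using X by blast
  moreover have "r {e, q, x} \<le> r (insert p {e, q, x})" by (rule rk_mono) blast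
  ultimately have "r (insert p {e, q, x}) = r {e, q, x}" using r3 by simp
  moreover have "{e, q, x} \<subseteq> insert x Q" using q set_facts by blast
  ultimately have cl: "r (insert p (insert x Q)) = r (insert x Q)" by (rule rk_insert_eq_mono)
  have sepQ: "vert_sep x Q" using vert_sep_compl[OF x_in_E vert_sep_x] .
  have PQ: "E - {x} - Q = P" using set_facts by blast
  have "p \<in> E - {x} - Q" using p PQ by blast
  moreover have "3 \<le> card (E - {x} - Q)" unfolding PQ by (rule card_ge_3(3))
  ultimately have "vert_sep x (insert p Q)" using vert_sep_insert[OF x_in_E sepQ _ cl] by blast
  then have "r (insert x (E - {x} - insert p Q)) = r (E - {x} - insert p Q)"
    by (rule vert_sep_rk(1)[OF x_in_E vert_sep_compl[OF x_in_E]])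
  moreover have "E - {x} - insert p Q \<subseteq> Y" using p set_facts by blast
  ultimately have "r (insert x Y) = r Y" by (rule rk_insert_eq_mono)
  then show False using rk_insert_x_Y by simp
qed

text \<open>If \<open>A\<close> and \<open>Y\<close> each meet \<open>Q\<close> once, then \<open>Q = {e, q, w}\<close> has rank 3 and spans \<open>x\<close>, so
  \<open>w\<close> is spanned by \<open>{e, q, x}\<close>; moving \<open>w\<close> into \<open>X\<close> shows that \<open>e\<close> is spanned by \<open>P\<close>.
  Then \<open>P\<close> spans \<open>E - {q, w}\<close>, so \<open>r P = r E\<close>, contradicting \<open>r P + r Q = r E + 2\<close>.\<close>
lemma A_and_Y_meet_Q_once:
  assumes "card (A \<inter> Q) = 1" "card (Y \<inter> Q) = 1"
  shows False
proof -
  obtain q where q: "A \<inter> Q = {q}" using assms(1) by (rule card_1_singletonE)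
  obtain w where w: "Y \<inter> Q = {w}" using assms(2) by (rule card_1_singletonE)
  have Q: "Q = {e, q, w}" using q w set_facts by blast
  have d: "e \<noteq> q" "e \<noteq> w" "q \<noteq> w" "q \<noteq> x" "e \<noteq> x" "q \<in> E" "w \<in> E"
    using q w set_facts by blast+
  have r3: "r {e, q, w} = 3" "r {e, q, x} = 3"
    by (rule rk_triple_if_not_in_triangle[OF e_in_E e_not_in_triangle]; use d x_in_E in blast)+
  have "insert w {e, q, x} = insert x Q" using Q by blast
  then have "r (insert w {e, q, x}) = r {e, q, x}" using rk_x(2) Q r3 by simp
  moreover have "{e, q, x} \<subseteq> insert e X" using q set_facts by blast
  ultimately have "r (insert w (insert e X)) = r (insert e X)" by (rule rk_insert_eq_mono)
  moreover have "w \<in> E - {e} - X" using w by blast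
  ultimately have "vert_sep e (insert w X)"
    using vert_sep_insert[OF e_in_E vert_sep_e _ _ card_ge_3(2)] by blast
  then have "r (E - insert w X) = r (E - {e} - insert w X)" by (rule vert_sep_rk(2)[OF e_in_E])
  moreover have "E - insert w X = insert e (E - {e} - insert w X)" using set_facts d by blast
  ultimately have "r (insert e (E - {e} - insert w X)) = r (E - {e} - insert w X)" by simp
  moreover have "E - {e} - insert w X \<subseteq> P" using w set_facts by blast
  ultimately have "r (insert e P) = r P" by (rule rk_insert_eq_mono)
  moreover have "r (insert x (insert e P)) = r (insert e P)"
    by (rule rk_insert_eq_mono[OF rk_x(1)]) blast
  moreover have "insert x (insert e P) = E - {q, w}" using Q set_facts d by blast
  ultimately have "r P = r E" using rk_pair(2)[OF d(6,7,3)] by simp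
  then show False using rk_x(3) Q r3(1) by simp
qed

lemma crossing_contradiction: False
proof -
  have fin: "finite A" "finite Y" "finite P" "finite (Q - {e})"
    using finite_E set_facts by (auto intro: finite_subset)
  have "card A = card (A \<inter> P) + card (A \<inter> Q)" "card Y = card (Y \<inter> P) + card (Y \<inter> Q)"
    using card_Int_split[OF fin(1), of P Q] card_Int_split[OF fin(2), of P Q] set_facts by blast+
  moreover have "card P = card (A \<inter> P) + card (Y \<inter> P)"
    using card_Int_split[OF fin(3), of A Y] set_facts by (auto simp: Int_commute)
  moreover have "card Q = card (A \<inter> Q) + card (Y \<inter> Q) + 1"
  proof -
    have "Q - {e} \<subseteq> A \<union> Y" "A \<inter> Y = {}" "(Q - {e}) \<inter> A = A \<inter> Q" "(Q - {e}) \<inter> Y = Y \<inter> Q"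
      using set_facts by blast+
    then have "card (Q - {e}) = card (A \<inter> Q) + card (Y \<inter> Q)"
      using card_Int_split[OF fin(4), of A Y] by simp
    moreover have "e \<in> Q" using set_facts by blast
    then have "card Q = card (Q - {e}) + 1" using card.remove[of Q e] finite_E by simp
    ultimately show ?thesis by simp
  qed
  ultimately have "(2 \<le> card (A \<inter> Q) \<and> 2 \<le> card (Y \<inter> P)) \<or> (2 \<le> card (A \<inter> P) \<and> 2 \<le> card (Y \<inter> Q))
      \<or> (card (A \<inter> P) = 1 \<and> card (A \<inter> Q) = 1) \<or> (card (A \<inter> Q) = 1 \<and> card (Y \<inter> Q) = 1)"
    using card_A card_ge_3 by linarith
  then show False
    using uncross_A_Q_Y_P uncross_A_P_Y_Q A_meets_P_and_Q_once A_and_Y_meet_Q_once by blast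
qed

end

context three_connected
begin

lemma three_connected_contract_if_vert_sep_meets_cocircuit_once:
  assumes cc: "cocircuit E indep C" and e: "e \<in> C" and x: "x \<in> C"
    and nte: "\<not> in_triangle E indep e" and ntx: "\<not> in_triangle E indep x"
    and sep: "vert_sep e X" and XC: "X \<inter> C = {x}"
  shows "n_connected 3 (E - {x}) (contract_indep indep x)"
proof (rule ccontr)
  assume nc: "\<not> ?thesis"
  have xE: "x \<in> E" using x cc unfolding cocircuit_def circuit_def by blast
  obtain P where P: "vert_sep x P" by (rule vert_sep_if_not_three_connected_contract[OF xE nc])
  obtain P' where P': "vert_sep x P'" "e \<notin> P'"
  proof (cases "e \<in> P")
    case True
    then show ?thesis using that[of "E - {x} - P"] vert_sep_compl[OF xE P] by blast
  qed (use P that in blast)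
  have "crossing_vert_seps E indep C e x X P'"
    using three_connected_axioms cc e x nte ntx sep XC P'
    unfolding crossing_vert_seps_def crossing_vert_seps_axioms_def by blast
  then show False by (rule crossing_vert_seps.crossing_contradiction)
qed

text \<open>The triangle through \<open>x\<close> meets \<open>C\<close> in a second element \<open>w\<close>, which must lie on the side
  \<open>Y\<close> of \<open>X\<close>; its third element \<open>t\<close> cannot lie in \<open>Y\<close> (it would put \<open>x\<close> in the closure of
  \<open>Y\<close>), so \<open>t \<in> X\<close> and \<open>w\<close> can be moved into \<open>X\<close>, leaving \<open>c2\<close> alone on the other side.\<close>
lemma vert_sep_through_triangle:
  assumes cc: "cocircuit E indep C" and C4: "card C = 4"
    and c1: "c1 \<in> C" and c2: "c2 \<in> C" and c12: "c1 \<noteq> c2"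
    and nt1: "\<not> in_triangle E indep c1" and nt2: "\<not> in_triangle E indep c2"
    and sep: "vert_sep c1 X" and XC: "X \<inter> C = {x}" and tri: "in_triangle E indep x"
  obtains X' where "vert_sep c1 X'" "X' \<inter> C = {c2}"
proof -
  let ?Y = "E - {c1} - X"
  have CE: "C \<subseteq> E" using cc unfolding cocircuit_def circuit_def by blast
  have c1E: "c1 \<in> E" using c1 CE by blast
  have X: "X \<subseteq> E - {c1}" using sep unfolding vert_sep_def by blast
  have xX: "x \<in> X" and xC: "x \<in> C" using XC by blast+
  obtain T where T: "triangle E indep T" "x \<in> T" using tri unfolding in_triangle_def by blast
  have T_tri: "in_triangle E indep z" if "z \<in> T" for z using T(1) that unfolding in_triangle_def by blast
  obtain w where w: "w \<in> T" "w \<in> C" "w \<noteq> x" using triangle_meets_cocircuit[OF cc T xC] .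
  have d: "w \<noteq> c1" "w \<noteq> c2" "x \<noteq> c2" using T_tri[OF w(1)] tri nt1 nt2 by blast+
  have wY: "w \<in> ?Y" using w(2,3) d(1) XC CE by blast
  have sub: "{c1, c2, x, w} \<subseteq> C" using c1 c2 xC w(2) by blast
  have "x \<noteq> c1" using X xX by blast
  then have "card {c1, c2, x, w} = card C" using c12 d w(3) C4 by simp
  moreover have "finite C" using C4 card.infinite by fastforce
  ultimately have C: "C = {c1, c2, x, w}" using card_subset_eq[OF _ sub] by simp
  have TE: "T \<subseteq> E" and card_T: "card T = 3" using T(1) unfolding triangle_def circuit_def by blast+
  then have "card (T - {x, w}) = 1" using T(2) w(1,3) by (simp add: card_Diff_subset finite_subset)
  then obtain t where t: "T - {x, w} = {t}" by (rule card_1_singletonE)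
  then have Txwt: "T = {x, w, t}" "t \<noteq> x" "t \<noteq> w" using T(2) w(1) by blast+
  have "t \<noteq> c1" "t \<in> E" using T_tri[of t] nt1 t TE by blast+
  then consider "t \<in> ?Y" | "t \<in> X" by blast
  then show ?thesis
  proof cases
    case 1
    have "T - {x} = {w, t}" "insert x {w, t} = T" using Txwt w(3) by blast+
    then have "r (insert x {w, t}) = r {w, t}" using triangle_rk_delete[OF T(1,2)] by simp
    then have "r (insert x ?Y) = r ?Y" by (rule rk_insert_eq_mono) (use 1 wY in blast)
    then show ?thesis using vert_sep_cocircuit_rk_insert[OF cc c1 nt1 sep XC] by simp
  next
    case 2
    have "T - {w} = {x, t}" "insert w {x, t} = T" using Txwt w(3) by blast+
    then have "r (insert w {x, t}) = r {x, t}" using triangle_rk_delete[OF T(1) w(1)] by simp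
    then have "r (insert w (insert c1 X)) = r (insert c1 X)"
      by (rule rk_insert_eq_mono) (use 2 xX in blast)
    moreover have "3 \<le> card ?Y" using vert_sep_card_ge_3[OF c1E nt1 vert_sep_compl[OF c1E sep]] .
    ultimately have "vert_sep c1 (insert w X)" using vert_sep_insert[OF c1E sep wY] by blast
    then have "vert_sep c1 (E - {c1} - insert w X)" by (rule vert_sep_compl[OF c1E])
    moreover have "(E - {c1} - insert w X) \<inter> C = {c2}" using C XC CE c12 d by auto
    ultimately show ?thesis using that by blast
  qed
qed

end

theorem lemma4p5:
  fixes E :: "'a set" and indep :: "'a set \<Rightarrow> bool" and Cs :: "'a set" and c1 c2 :: 'a
  assumes "matroid E indep"
    and "n_connected 3 E indep"
    and "cocircuit E indep Cs" and "card Cs = 4"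
    and "c1 \<in> Cs" and "c2 \<in> Cs" and "c1 \<noteq> c2"
    and "\<not> in_triangle E indep c1" and "\<not> in_triangle E indep c2"
  shows "\<exists>c \<in> Cs. n_connected 3 (E - {c}) (contract_indep indep c)"
proof -
  have "Cs \<subseteq> E" using assms(3) unfolding cocircuit_def circuit_def by blast
  then have "4 \<le> card E" using assms(1,4) card_mono[of E Cs] unfolding matroid_def by auto
  then interpret three_connected E indep
    using assms(1,2) by unfold_locales
  have c1E: "c1 \<in> E" using \<open>Cs \<subseteq> E\<close> assms(5) by blast
  show ?thesis
  proof (cases "n_connected 3 (E - {c1}) (contract_indep indep c1)")
    case True
    then show ?thesis using assms(5) by blast
  next
    case False
    then obtain X where "vert_sep c1 X" by (rule vert_sep_if_not_three_connected_contract[OF c1E])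
    then obtain X x where sep: "vert_sep c1 X" and XC: "X \<inter> Cs = {x}"
      using obtain_vert_sep_meeting_cocircuit_once assms(3-5) by blast
    show ?thesis
    proof (cases "in_triangle E indep x")
      case False
      then show ?thesis
        using three_connected_contract_if_vert_sep_meets_cocircuit_once[OF assms(3,5) _ assms(8) _ sep XC]
        XC by blast
    next
      case True
      then obtain X' where "vert_sep c1 X'" "X' \<inter> Cs = {c2}"
        using vert_sep_through_triangle[OF assms(3-9) sep XC] by blast
      then show ?thesis
        using three_connected_contract_if_vert_sep_meets_cocircuit_once[OF assms(3,5,6,8,9)] assms(6)
        by blast
    qed
  qed
qed

end
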